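(* In the standing setup (with an arbitrary nonempty finite set of fluids), for every $t_{\mathrm b}\in I$ and every $t\in I$ with $t\ge t_{\mathrm b}$, $$|x(t)|\le |x(t_{\mathrm b})|+\sqrt{2}\,c\,l\,(t-t_{\mathrm b}).$$
   Context: Standing setup. Fix real constants $c>0$ and $l>0$, a nonempty finite index set $A$, and constants $w_\alpha\in[-1,1]$ for $\alpha\in A$. Let $I\subseteq\mathbb{R}$ be an interval and let $x,y_{\mathrm r},y_{\mathrm i},h,z_\alpha$ ($\alpha\in A$) be real $C^1$ functions of $t\in I$ with $h>0$ and $z_\alpha\ge 0$. Define $\xi(t)=x(t)^2+\sum_{\beta\in A}\frac{1+w_\beta}{2}z_\beta(t)^2$. Assume that on $I$: $\dot x=\big[-x+4c\,y_{\mathrm r}y_{\mathrm i}+x\,\xi\big]h$, $\dot y_{\mathrm r}=\big[\xi\,y_{\mathrm r}-c\,x\,y_{\mathrm i}\big]h$, $\dot y_{\mathrm i}=\big[\xi\,y_{\mathrm i}+c\,x\,y_{\mathrm r}\big]h$, $\dot z_\alpha=\big[-\tfrac{1+w_\alpha}{2}+\xi\big]z_\alpha h$, $\dot h=-\xi h^2$, together with the constraints $x^2+4y_{\mathrm r}^2+\sum_{\beta\in A}z_\beta^2=1$ and $y_{\mathrm r}^2+y_{\mathrm i}^2=\frac{l^2}{2h^2}$. (This autonomous system is equivalent to FLRW cosmology of a canonical scalar with potential $m^2f^2(1-\cos(\phi/f))$ coupled to perfect fluids with state parameters $w_\alpha$; there $h=(d-1)H$, $\xi=\epsilon/(d-1)$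 with $\epsilon=-\dot H/H^2$, and $cl=m/\sqrt2$.) *)

theory Defs
  imports "HOL-Analysis.Analysis"
begin

definition C1_with_deriv :: "real set \<Rightarrow> (real \<Rightarrow> real) \<Rightarrow> (real \<Rightarrow> real) \<Rightarrow> bool" where
  "C1_with_deriv I f f' \<longleftrightarrow>
     (\<forall>t\<in>I. (f has_real_derivative f' t) (at t within I)) \<and> continuous_on I f'"

definition xi_fun :: "'a set \<Rightarrow> ('a \<Rightarrow> real) \<Rightarrow> (real \<Rightarrow> real) \<Rightarrow> ('a \<Rightarrow> real \<Rightarrow> real) \<Rightarrow> real \<Rightarrow> real" where
  "xi_fun A w x z t = (x t)\<^sup>2 + (\<Sum>\<beta>\<in>A. (1 + w \<beta>) / 2 * (z \<beta> t)\<^sup>2)"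

end

theory Submission
  imports Defs
begin

(* Write x' = x (xi - 1) h + 4 c y_r y_i h. Since w <= 1, the first constraint gives xi <= 1 and
   2 |y_r| <= 1, and the second gives sqrt 2 |y_i| h <= l. So the first term never pushes x away
   from 0 and the second has size at most sqrt 2 c l, which bounds the growth rate of |x|. *)

lemma le_max_plus_bound_if_deriv_bounded_where_positive:
  fixes g g' :: "real \<Rightarrow> real"
  assumes "a \<le> b"
    and deriv: "\<And>s. s \<in> {a..b} \<Longrightarrow> (g has_real_derivative g' s) (at s within {a..b})"
    and bound: "\<And>s. s \<in> {a..b} \<Longrightarrow> g s > 0 \<Longrightarrow> g' s \<le> K"
    and "K \<ge> 0"
  shows "g b \<le> max (g a) 0 + K * (b - a)"
proof -
  define m where "m = max (g a) 0"
  \<comment> \<open>After the last time g is at most m, g stays positive, so the slope is at most K there.\<close>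
  define T where "T = {s \<in> {a..b}. g s \<le> m}"
  have "continuous_on {a..b} g"
    using deriv by (meson DERIV_continuous continuous_on_eq_continuous_within)
  then have "closed T"
    unfolding T_def by (intro continuous_on_closed_Collect_le) (auto intro: continuous_intros)
  moreover have "bounded T" "a \<in> T"
    using \<open>a \<le> b\<close> by (auto simp: T_def m_def intro: bounded_subset[OF bounded_closed_interval])
  ultimately obtain s0 where "s0 \<in> T" and s0_max: "\<And>s. s \<in> T \<Longrightarrow> s \<le> s0"
    using compact_attains_sup[of T] by (auto simp: compact_eq_bounded_closed)
  then have s0: "a \<le> s0" "s0 \<le> b" "g s0 \<le> m" by (auto simp: T_def)
  show ?thesis
  proof (cases "s0 = b")
    case True
    have "0 \<le> K * (b - a)" using \<open>K \<ge> 0\<close> \<open>a \<le> b\<close> by simp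
    with True s0 show ?thesis by (simp add: m_def)
  next
    case False
    with s0 have "s0 < b" by simp
    moreover have "(g has_derivative (\<lambda>d. d * g' s)) (at s within {s0..b})"
      if "s0 \<le> s" "s \<le> b" for s
    proof -
      have "(g has_real_derivative g' s) (at s within {s0..b})"
        using deriv[of s] that s0 by (auto intro: has_field_derivative_subset)
      then show ?thesis by (simp add: has_field_derivative_def mult.commute[of _ "g' s"])
    qed
    ultimately obtain \<xi> where \<xi>: "s0 < \<xi>" "\<xi> < b" and mvt: "g b - g s0 = (b - s0) * g' \<xi>"
      using mvt_simple[of s0 b g "\<lambda>s d. d * g' s"] by auto
    have "\<xi> \<notin> T" using s0_max \<xi> by force
    then have "g \<xi> > 0" using \<xi> s0 by (auto simp: T_def m_def)
    then have "g' \<xi> \<le> K" using bound \<xi> s0 by auto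
    then have "g b - g s0 \<le> (b - s0) * K" using mvt \<xi> by (simp add: mult_left_mono)
    also have "\<dots> \<le> (b - a) * K" using s0 \<open>K \<ge> 0\<close> by (intro mult_right_mono) auto
    finally show ?thesis using s0 by (simp add: m_def algebra_simps)
  qed
qed

lemma abs_le_if_deriv_bounded_outward:
  fixes f f' :: "real \<Rightarrow> real"
  assumes "a \<le> b"
    and deriv: "\<And>s. s \<in> {a..b} \<Longrightarrow> (f has_real_derivative f' s) (at s within {a..b})"
    and bound: "\<And>s. s \<in> {a..b} \<Longrightarrow> f s \<noteq> 0 \<Longrightarrow> sgn (f s) * f' s \<le> K"
    and "K \<ge> 0"
  shows "\<bar>f b\<bar> \<le> \<bar>f a\<bar> + K * (b - a)"
proof -
  define \<sigma> where "\<sigma> = sgn (f b)"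
  have "\<sigma> * f b \<le> max (\<sigma> * f a) 0 + K * (b - a)"
  proof (rule le_max_plus_bound_if_deriv_bounded_where_positive[OF \<open>a \<le> b\<close> _ _ \<open>K \<ge> 0\<close>])
    show "((\<lambda>s. \<sigma> * f s) has_real_derivative \<sigma> * f' s) (at s within {a..b})" if "s \<in> {a..b}" for s
      using deriv[OF that] by (rule DERIV_cmult)
    show "\<sigma> * f' s \<le> K" if "s \<in> {a..b}" "\<sigma> * f s > 0" for s
    proof -
      have "sgn (f s) = \<sigma>" using \<open>\<sigma> * f s > 0\<close>
        by (auto simp: \<sigma>_def sgn_if zero_less_mult_iff split: if_splits)
      then show ?thesis using bound that by fastforce
    qed
  qed
  moreover have "max (\<sigma> * f a) 0 \<le> \<bar>f a\<bar>" by (auto simp: \<sigma>_def sgn_if)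
  moreover have "\<sigma> * f b = \<bar>f b\<bar>" by (simp add: \<sigma>_def abs_sgn)
  ultimately show ?thesis by linarith
qed

lemma xi_fun_le_one:
  assumes "\<forall>\<beta>\<in>A. w \<beta> \<le> 1" and "(x t)\<^sup>2 + (\<Sum>\<beta>\<in>A. (z \<beta> t)\<^sup>2) \<le> 1"
  shows "xi_fun A w x z t \<le> 1"
proof -
  have "(\<Sum>\<beta>\<in>A. (1 + w \<beta>) / 2 * (z \<beta> t)\<^sup>2) \<le> (\<Sum>\<beta>\<in>A. (z \<beta> t)\<^sup>2)"
    using assms(1) mult_right_mono[of "(1 + w _) / 2" 1] by (intro sum_mono) simp
  with assms(2) show ?thesis by (simp add: xi_fun_def)
qed

lemma abs_coupling_term_le:
  fixes c yr yi h l :: real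
  assumes "c \<ge> 0" and "l \<ge> 0" and "4 * yr\<^sup>2 \<le> 1" and "2 * yi\<^sup>2 * h\<^sup>2 \<le> l\<^sup>2"
  shows "\<bar>4 * c * yr * yi * h\<bar> \<le> sqrt 2 * c * l"
proof -
  have "(4 * yr * yi * h)\<^sup>2 = (4 * yr\<^sup>2) * (2 * (2 * yi\<^sup>2 * h\<^sup>2))" by algebra
  also have "\<dots> \<le> 1 * (2 * l\<^sup>2)"
    using assms(3,4) by (intro mult_mono) auto
  finally have "\<bar>4 * yr * yi * h\<bar> \<le> sqrt (2 * l\<^sup>2)" by (simp add: real_le_rsqrt)
  then have "\<bar>4 * yr * yi * h\<bar> \<le> sqrt 2 * l" using \<open>l \<ge> 0\<close> by (simp add: real_sqrt_mult)
  then show ?thesis using \<open>c \<ge> 0\<close>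
    by (simp add: abs_mult mult_left_mono mult.assoc mult.left_commute)
qed

lemma sgn_mult_x_velocity_le:
  fixes x yr yi h \<xi> c l :: real
  assumes "\<xi> \<le> 1" and "h > 0" and "c \<ge> 0" and "l \<ge> 0"
    and "4 * yr\<^sup>2 \<le> 1" and "2 * yi\<^sup>2 * h\<^sup>2 \<le> l\<^sup>2"
  shows "sgn x * ((- x + 4 * c * yr * yi + x * \<xi>) * h) \<le> sqrt 2 * c * l"
proof -
  have "sgn x * ((- x + 4 * c * yr * yi + x * \<xi>) * h)
      = \<bar>x\<bar> * (\<xi> - 1) * h + sgn x * (4 * c * yr * yi * h)"
    by (simp add: algebra_simps sgn_mult_self_eq flip: abs_sgn)
  also have "\<dots> \<le> 0 + \<bar>4 * c * yr * yi * h\<bar>"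
  proof (rule add_mono)
    show "\<bar>x\<bar> * (\<xi> - 1) * h \<le> 0"
      using assms(1,2) by (simp add: mult_nonpos_nonneg mult_nonneg_nonpos)
    show "sgn x * (4 * c * yr * yi * h) \<le> \<bar>4 * c * yr * yi * h\<bar>"
      by (cases x "0::real" rule: linorder_cases) auto
  qed
  also have "\<dots> \<le> sqrt 2 * c * l"
    using abs_coupling_term_le assms(3-6) by simp
  finally show ?thesis .
qed

lemma sgn_mult_x_velocity_le_of_constraints:
  assumes "\<forall>\<beta>\<in>A. w \<beta> \<le> 1" and "h s > 0" and "c \<ge> 0" and "l \<ge> 0"
    and unit: "(x s)\<^sup>2 + 4 * (yr s)\<^sup>2 + (\<Sum>\<beta>\<in>A. (z \<beta> s)\<^sup>2) = 1"
    and amplitude: "(yr s)\<^sup>2 + (yi s)\<^sup>2 = l\<^sup>2 / (2 * (h s)\<^sup>2)"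
  shows "sgn (x s) * ((- x s + 4 * c * yr s * yi s + x s * xi_fun A w x z s) * h s)
    \<le> sqrt 2 * c * l"
proof (rule sgn_mult_x_velocity_le)
  have "(\<Sum>\<beta>\<in>A. (z \<beta> s)\<^sup>2) \<ge> 0" by (simp add: sum_nonneg)
  then have "4 * (yr s)\<^sup>2 \<le> 1 \<and> (x s)\<^sup>2 + (\<Sum>\<beta>\<in>A. (z \<beta> s)\<^sup>2) \<le> 1"
    using unit zero_le_power2[of "x s"] zero_le_power2[of "yr s"] by linarith
  then show "4 * (yr s)\<^sup>2 \<le> 1" and "xi_fun A w x z s \<le> 1"
    using assms(1) by (auto intro: xi_fun_le_one)
  have "(yi s)\<^sup>2 \<le> l\<^sup>2 / (2 * (h s)\<^sup>2)" using amplitude by (smt (verit) zero_le_power2)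
  then show "2 * (yi s)\<^sup>2 * (h s)\<^sup>2 \<le> l\<^sup>2"
    using \<open>h s > 0\<close> by (simp add: pos_le_divide_eq mult_ac)
qed (use assms in auto)

theorem lemma1:
  fixes c l :: real and A :: "'a set" and w :: "'a \<Rightarrow> real"
    and I :: "real set"
    and x yr yi h :: "real \<Rightarrow> real" and z :: "'a \<Rightarrow> real \<Rightarrow> real"
  assumes c_pos: "c > 0" and l_pos: "l > 0"
    and A_fin: "finite A" and A_ne: "A \<noteq> {}"
    and w_range: "\<forall>\<alpha>\<in>A. -1 \<le> w \<alpha> \<and> w \<alpha> \<le> 1"
    and I_int: "is_interval I"
    and h_pos: "\<forall>t\<in>I. h t > 0"
    and z_nonneg: "\<forall>\<alpha>\<in>A. \<forall>t\<in>I. z \<alpha> t \<ge> 0"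
    and x_ode: "C1_with_deriv I x
       (\<lambda>t. (- x t + 4 * c * yr t * yi t + x t * xi_fun A w x z t) * h t)"
    and yr_ode: "C1_with_deriv I yr
       (\<lambda>t. (xi_fun A w x z t * yr t - c * x t * yi t) * h t)"
    and yi_ode: "C1_with_deriv I yi
       (\<lambda>t. (xi_fun A w x z t * yi t + c * x t * yr t) * h t)"
    and z_ode: "\<forall>\<alpha>\<in>A. C1_with_deriv I (z \<alpha>)
       (\<lambda>t. (- (1 + w \<alpha>) / 2 + xi_fun A w x z t) * z \<alpha> t * h t)"
    and h_ode: "C1_with_deriv I h (\<lambda>t. - xi_fun A w x z t * (h t)\<^sup>2)"
    and constr1: "\<forall>t\<in>I. (x t)\<^sup>2 + 4 * (yr t)\<^sup>2 + (\<Sum>\<beta>\<in>A. (z \<beta> t)\<^sup>2) = 1"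
    and constr2: "\<forall>t\<in>I. (yr t)\<^sup>2 + (yi t)\<^sup>2 = l\<^sup>2 / (2 * (h t)\<^sup>2)"
  shows "\<forall>tb\<in>I. \<forall>t\<in>I. tb \<le> t \<longrightarrow>
           \<bar>x t\<bar> \<le> \<bar>x tb\<bar> + sqrt 2 * c * l * (t - tb)"
proof (intro ballI impI)
  fix tb t assume "tb \<in> I" "t \<in> I" "tb \<le> t"
  then have sub: "{tb..t} \<subseteq> I" using I_int by (meson atLeastAtMost_iff is_interval_1 subsetI)
  show "\<bar>x t\<bar> \<le> \<bar>x tb\<bar> + sqrt 2 * c * l * (t - tb)"
  proof (rule abs_le_if_deriv_bounded_outward[OF \<open>tb \<le> t\<close>])
    show "(x has_real_derivative (- x s + 4 * c * yr s * yi s + x s * xi_fun A w x z s) * h s)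
        (at s within {tb..t})" if "s \<in> {tb..t}" for s
      using x_ode that sub unfolding C1_with_deriv_def by (meson has_field_derivative_subset subsetD)
    show "sgn (x s) * ((- x s + 4 * c * yr s * yi s + x s * xi_fun A w x z s) * h s)
        \<le> sqrt 2 * c * l" if "s \<in> {tb..t}" for s
      using that sub w_range h_pos c_pos l_pos constr1 constr2
      by (intro sgn_mult_x_velocity_le_of_constraints) auto
    show "sqrt 2 * c * l \<ge> 0" using c_pos l_pos by simp
  qed
qed

end
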